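(* Let $p$ be an odd prime, $q$ an odd positive integer, and $a\in(\mathbb{Z}/pq\mathbb{Z})^*$ such that $a\bmod p$ generates $(\mathbb{Z}/p\mathbb{Z})^*$ and $a^{(p-1)/2}\equiv-1\pmod{pq}$. Suppose $q$ has a prime divisor $\ell\ge5$ which is a Fermat prime (i.e. of the form $2^{2^m}+1$) and a prime divisor $\ell'\equiv3\pmod 4$. Then $|S_{pq}(a)\cap(S_{pq}(a)+1)|=0$.
   Context: $S_{pq}(a)=\{a^j:0\le j<p-1\}\subseteq\mathbb{Z}/pq\mathbb{Z}$ and $S+1=\{s+1:s\in S\}$. *)

theory Defs
  imports "HOL-Number_Theory.Number_Theory"
begin

text \<open>Residues modulo n are represented by their canonical representatives in {0..<n}.\<close>

definition S_set :: "nat \<Rightarrow> nat \<Rightarrow> nat \<Rightarrow> nat set" where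
  "S_set p q a = {a ^ j mod (p * q) | j. j < p - 1}"

definition shift1 :: "nat \<Rightarrow> nat set \<Rightarrow> nat set" where
  "shift1 n S = {(s + 1) mod n | s. s \<in> S}"

definition fermat_prime :: "nat \<Rightarrow> bool" where
  "fermat_prime l \<longleftrightarrow> prime l \<and> (\<exists>m. l = 2 ^ (2 ^ m) + 1)"

end

theory Submission
  imports Defs
begin

text \<open>
  Reduce modulo the prime divisors of q. If d = (p - 1)/2, then a^d = -1 modulo every prime
  divisor r of q, so the order of a modulo r divides 2d but not d. For r = l' = 3 (mod 4) the
  order also divides r - 1 = 2 * odd, which forces d to be odd. For the Fermat prime l the
  order is a power of 2 dividing 2d with d odd, hence a^2 = 1 (mod l). So every power of a is
  congruent to 1 or to a modulo l, and since l \<ge> 5 no power of a is congruent to another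
  power plus one; a fortiori not modulo pq.
\<close>

lemma ord_dvd_double_not_dvd_if_power_cong_minus_one:
  fixes a n d :: nat
  assumes "n > 2" and minus_one: "[int a ^ d = - 1] (mod int n)"
  shows "ord n a dvd 2 * d" and "\<not> ord n a dvd d"
proof -
  have "[(int a ^ d) ^ 2 = (- 1) ^ 2] (mod int n)"
    using minus_one by (rule cong_pow)
  then have "[int (a ^ (2 * d)) = int 1] (mod int n)"
    by (simp add: power_mult[symmetric] mult.commute)
  then show "ord n a dvd 2 * d"
    using cong_int_iff ord_divides by blast
  show "\<not> ord n a dvd d"
  proof
    assume "ord n a dvd d"
    then have "[int (a ^ d) = int 1] (mod int n)"
      using cong_int_iff ord_divides by blast
    then have "[1 = - 1] (mod int n)"
      using minus_one by (metis of_nat_1 of_nat_power cong_sym cong_trans)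
    then have "int n dvd 2"
      by (simp add: cong_iff_dvd_diff)
    then have "n dvd 2"
      by presburger
    with \<open>n > 2\<close> show False
      by (auto dest: dvd_imp_le)
  qed
qed

lemma ord_dvd_prime_minus_one:
  fixes a r :: nat
  assumes "prime r" and "coprime a r"
  shows "ord r a dvd r - 1"
proof -
  have "\<not> r dvd a"
    using assms by (metis coprime_absorb_right not_prime_unit)
  then show ?thesis
    using fermat_theorem[OF \<open>prime r\<close>] ord_divides by blast
qed

lemma odd_if_dvd_double_not_dvd:
  fixes x d u :: nat
  assumes "x dvd 2 * d" and "\<not> x dvd d" and "x dvd 2 * u" and "odd u"
  shows "odd d"
proof
  assume "even d"
  have "x dvd 2 * gcd d u"
    using assms(1,3) by (simp add: gcd_mult_distrib_nat)
  moreover have "coprime 2 (gcd d u)"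
    using \<open>odd u\<close> by (meson dvd_trans gcd_dvd2 coprime_left_2_iff_odd)
  then have "2 * gcd d u dvd d"
    using \<open>even d\<close> by (simp add: divides_mult)
  ultimately show False
    using assms(2) dvd_trans by blast
qed

lemma odd_exponent_if_power_cong_minus_one:
  fixes a r d :: nat
  assumes "prime r" and "[r = 3] (mod 4)" and "coprime a r"
    and minus_one: "[int a ^ d = - 1] (mod int r)"
  shows "odd d"
proof -
  have "r mod 4 = 3"
    using \<open>[r = 3] (mod 4)\<close> by (simp add: cong_def)
  then have "r > 2" and r_minus_one: "r - 1 = 2 * ((r - 1) div 2)" "odd ((r - 1) div 2)"
    by presburger+
  show ?thesis
  proof (rule odd_if_dvd_double_not_dvd)
    show "ord r a dvd 2 * d" and "\<not> ord r a dvd d"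
      using ord_dvd_double_not_dvd_if_power_cong_minus_one[OF \<open>r > 2\<close> minus_one] by blast+
    show "ord r a dvd 2 * ((r - 1) div 2)"
      using ord_dvd_prime_minus_one[OF assms(1,3)] r_minus_one(1) by simp
  qed (fact r_minus_one(2))
qed

lemma square_cong_one_if_power_cong_minus_one:
  fixes a r d k :: nat
  assumes "prime r" and "r > 2" and "r - 1 = 2 ^ k" and "coprime a r" and "odd d"
    and minus_one: "[int a ^ d = - 1] (mod int r)"
  shows "[a ^ 2 = 1] (mod r)"
proof -
  have "ord r a dvd 2 ^ k"
    using ord_dvd_prime_minus_one[OF assms(1,4)] \<open>r - 1 = 2 ^ k\<close> by simp
  then obtain i where i: "ord r a = 2 ^ i"
    using divides_primepow_nat[of 2] by auto
  have "coprime (ord r a) d"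
    using i \<open>odd d\<close> by simp
  moreover have "ord r a dvd d * 2"
    using ord_dvd_double_not_dvd_if_power_cong_minus_one(1)[OF \<open>r > 2\<close> minus_one]
    by (simp add: mult.commute)
  ultimately have "ord r a dvd 2"
    by (simp add: coprime_dvd_mult_right_iff)
  then show ?thesis
    using ord_divides by blast
qed

lemma power_cong_one_or_self:
  fixes a n j :: nat
  assumes "[a ^ 2 = 1] (mod n)"
  shows "[a ^ j = 1] (mod n) \<or> [a ^ j = a] (mod n)"
proof -
  have even_power: "[a ^ (2 * i) = 1] (mod n)" for i
    using cong_pow[OF assms, of i] by (simp add: power_mult)
  show ?thesis
  proof (cases "even j")
    case True
    then show ?thesis
      using even_power by (auto elim: evenE)
  next
    case False
    then obtain i where "j = 2 * i + 1"
      by (auto elim: oddE)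
    have "[a ^ (2 * i) * a = 1 * a] (mod n)"
      using even_power by (intro cong_mult cong_refl)
    then show ?thesis
      using \<open>j = 2 * i + 1\<close> by (simp add: mult.commute)
  qed
qed

lemma no_power_cong_power_plus_one:
  fixes a n j k :: nat
  assumes square: "[a ^ 2 = 1] (mod n)" and "n \<ge> 5" and "coprime a n"
  shows "\<not> [a ^ j = a ^ k + 1] (mod n)"
proof
  assume shift: "[a ^ j = a ^ k + 1] (mod n)"
  have no_shift: "\<not> [u = v + 1] (mod n)" if "u \<in> {1, a}" and "v \<in> {1, a}" for u v
  proof
    assume uv: "[u = v + 1] (mod n)"
    consider "u = 1" "v = 1" | "u = 1" "v = a" | "u = a" "v = 1" | "u = a" "v = a"
      using \<open>u \<in> {1, a}\<close> \<open>v \<in> {1, a}\<close> by blast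
    then show False
    proof cases
      case 1
      then show False
        using uv \<open>n \<ge> 5\<close> by (simp add: cong_def)
    next
      case 2
      then have "[0 + 1 = a + 1] (mod n)"
        using uv by simp
      then have "[a = 0] (mod n)"
        by (simp only: cong_add_rcancel_nat cong_sym_eq)
      then have "n dvd a"
        by (simp add: cong_0_iff)
      then show False
        using \<open>coprime a n\<close> \<open>n \<ge> 5\<close> by (simp add: coprime_absorb_right)
    next
      case 3
      then have "[a = 2] (mod n)"
        using uv by (simp add: numeral_2_eq_2)
      then have "[a ^ 2 = 2 ^ 2] (mod n)"
        by (rule cong_pow)
      then have "[1 = 4] (mod n)"
        using cong_trans[OF cong_sym[OF square]] by simp
      then show False
        using \<open>n \<ge> 5\<close> by (simp add: cong_def)
    next
      case 4
      then have "[a + 0 = a + 1] (mod n)"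
        using uv by simp
      then have "[0 = 1] (mod n)"
        by (simp only: cong_add_lcancel_nat)
      then show False
        using \<open>n \<ge> 5\<close> by (simp add: cong_def)
    qed
  qed
  obtain u where "u \<in> {1, a}" "[a ^ j = u] (mod n)"
    using power_cong_one_or_self[OF square, of j] by blast
  moreover obtain v where "v \<in> {1, a}" "[a ^ k = v] (mod n)"
    using power_cong_one_or_self[OF square, of k] by blast
  ultimately have "[u = v + 1] (mod n)"
    using shift by (meson cong_add cong_refl cong_sym cong_trans)
  then show False
    using no_shift \<open>u \<in> {1, a}\<close> \<open>v \<in> {1, a}\<close> by blast
qed

theorem mainTheorem10:
  fixes p q a l l' :: nat
  assumes "prime p" and "odd p"
    and "q > 0" and "odd q"
    and "a < p * q" and "coprime a (p * q)"
    and "ord p a = p - 1"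
    and "[int a ^ ((p - 1) div 2) = - 1] (mod int (p * q))"
    and "l dvd q" and "fermat_prime l" and "l \<ge> 5"
    and "l' dvd q" and "prime l'" and "[l' = 3] (mod 4)"
  shows "card (S_set p q a \<inter> shift1 (p * q) (S_set p q a)) = 0"
proof -
  define d where "d = (p - 1) div 2"
  have divisors: "l dvd p * q" "l' dvd p * q"
    using \<open>l dvd q\<close> \<open>l' dvd q\<close> by simp_all
  have coprime: "coprime a l" "coprime a l'"
    using coprime_divisors[OF dvd_refl _ \<open>coprime a (p * q)\<close>] divisors by blast+
  have "int l dvd int (p * q)" "int l' dvd int (p * q)"
    using divisors by (simp_all only: of_nat_dvd_iff)
  then have minus_one: "[int a ^ d = - 1] (mod int l)" "[int a ^ d = - 1] (mod int l')"
    using cong_dvd_modulus[OF assms(8)[folded d_def]] by blast+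
  have "odd d"
    by (rule odd_exponent_if_power_cong_minus_one[OF \<open>prime l'\<close> \<open>[l' = 3] (mod 4)\<close> coprime(2) minus_one(2)])
  obtain m where "prime l" and "l - 1 = 2 ^ 2 ^ m"
    using \<open>fermat_prime l\<close> by (auto simp: fermat_prime_def)
  moreover have "l > 2"
    using \<open>l \<ge> 5\<close> by simp
  ultimately have square: "[a ^ 2 = 1] (mod l)"
    using square_cong_one_if_power_cong_minus_one coprime(1) \<open>odd d\<close> minus_one(1) by blast
  have "S_set p q a \<inter> shift1 (p * q) (S_set p q a) = {}"
  proof (rule ccontr)
    assume "S_set p q a \<inter> shift1 (p * q) (S_set p q a) \<noteq> {}"
    then obtain j k where "a ^ j mod (p * q) = (a ^ k mod (p * q) + 1) mod (p * q)"
      unfolding S_set_def shift1_def by auto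
    then have "[a ^ j = a ^ k + 1] (mod p * q)"
      unfolding cong_def by (metis mod_add_left_eq)
    then have "[a ^ j = a ^ k + 1] (mod l)"
      using divisors cong_dvd_modulus_nat by blast
    then show False
      using no_power_cong_power_plus_one[OF square \<open>l \<ge> 5\<close>] coprime by blast
  qed
  then show ?thesis
    by simp
qed

end
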